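(* Let $\mathcal X\subseteq\mathbb R^n$, $\bm c\in\mathbb R^n$, $\varepsilon\in(0,1)$, scenarios $\bm\xi^1,\dots,\bm\xi^N$ with probabilities $p_i\ge0$, $\sum_ip_i=1$, and $g(\bm x,\bm\xi)=\max_{j\in[J]}g_j(\bm x,\bm\xi)$. Let $\bm x^*$ be an optimal solution of $$v^*=\min_{\bm x\in\mathcal X}\Big\{\bm c^\top\bm x:\ \sum_{i=1}^Np_i\mathbb I[g(\bm x,\bm\xi^i)\le0]\ge1-\varepsilon\Big\},$$ and define $I^*=\{i\in[N]: g(\bm x^*,\bm\xi^i)\le0\}$. Suppose either (A) $\sum_{i\in[N]:\,g(\bm x^*,\bm\xi^i)<0}p_i>1-\varepsilon$; or (B) $\mathcal X$ is convex, $g(\cdot,\bm\xi^i)$ is convex for all $i\in I^*$, and there exists $\bar I\subseteq I^*$ such that for each $i\in\bar I$ there is $\bm x^i\in\mathcal X$ with $g(\bm x^i,\bm\xi^{i'})\le0$ for all $i'\in I^*$ and $g(\bm x^i,\bm\xi^i)<0$, and $\sum_{i\in\bar I}p_i>1-\varepsilon$. Then $$v^*=\inf\big\{v^{\mathrm{CVaR}}(\bm\alpha):\ \alpha_i=1,\ i\in[N]\setminus I^*,\ \ \alpha_i\ge1,\ i\in I^*\big\}.$$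
   Context: $\mathbb I[\cdot]$ is the indicator function. For $\bm\alpha\ge\bm e$ (all-ones vector), $v^{\mathrm{CVaR}}(\bm\alpha)=\min_{\bm x\in\mathcal X,\beta\le0,\bm s\ge\bm0}\{\bm c^\top\bm x:\ \varepsilon\beta+\sum_ip_is_i\le0,\ s_i+\beta\ge\alpha_ig(\bm x,\bm\xi^i),\ i\in[N]\}$, with value $+\infty$ if infeasible. *)

theory Defs
  imports "HOL-Analysis.Analysis"
begin

definition gmax :: "nat \<Rightarrow> (nat \<Rightarrow> 'x \<Rightarrow> 'b \<Rightarrow> real) \<Rightarrow> 'x \<Rightarrow> 'b \<Rightarrow> real" where
  "gmax J gj x \<xi> = Max ((\<lambda>j. gj j x \<xi>) ` {1..J})"

text \<open>Optimal value of the CVaR approximation with scaling vector alpha;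
  the minimum is read as an infimum in the extended reals (+infinity if infeasible).\<close>
definition vCVaR ::
  "('a::real_inner) set \<Rightarrow> 'a \<Rightarrow> real \<Rightarrow> nat \<Rightarrow> (nat \<Rightarrow> real) \<Rightarrow> ('a \<Rightarrow> 'b \<Rightarrow> real)
   \<Rightarrow> (nat \<Rightarrow> 'b) \<Rightarrow> (nat \<Rightarrow> real) \<Rightarrow> ereal" where
  "vCVaR X c \<epsilon> N p g \<xi> \<alpha> =
     Inf {ereal (c \<bullet> x) | x \<beta> s. x \<in> X \<and> \<beta> \<le> 0 \<and> (\<forall>i\<in>{1..N}. s i \<ge> 0) \<and>
          \<epsilon> * \<beta> + (\<Sum>i=1..N. p i * s i) \<le> 0 \<and>
          (\<forall>i\<in>{1..N}. s i + \<beta> \<ge> \<alpha> i * g x (\<xi> i))}"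

end

(*
  For every scaling alpha > 0 the CVaR constraint is a conservative approximation of the
  chance constraint: from eps beta + sum p_i s_i <= 0 and s_i >= alpha_i g_i - beta one gets
  P(g > 0) <= eps, so every v_CVaR(alpha) is at least v*.
  Conversely, if y in X has g(y, xi^i) < 0 on a set K of scenarios with P(K) > 1 - eps, then
  taking alpha_i large on K (and beta = -t for large t) makes y CVaR-feasible, so the infimum
  is at most c'y. Under (A) take y = x*. Under (B) the average of the points x^i is strictly
  feasible on Ibar, and by convexity so is every point strictly between x* and it, whose costs
  approach v*. Only the values of g enter, so its max-structure plays no role.
*)
theory Submission
  imports Defs
begin

definition cvar_feasible ::
  "('a::real_inner) set \<Rightarrow> real \<Rightarrow> nat \<Rightarrow> (nat \<Rightarrow> real) \<Rightarrow> ('a \<Rightarrow> 'b \<Rightarrow> real)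
   \<Rightarrow> (nat \<Rightarrow> 'b) \<Rightarrow> (nat \<Rightarrow> real) \<Rightarrow> 'a \<Rightarrow> real \<Rightarrow> (nat \<Rightarrow> real) \<Rightarrow> bool" where
  "cvar_feasible X \<epsilon> N p g \<xi> \<alpha> x \<beta> s \<longleftrightarrow>
     x \<in> X \<and> \<beta> \<le> 0 \<and> (\<forall>i\<in>{1..N}. s i \<ge> 0) \<and> \<epsilon> * \<beta> + (\<Sum>i=1..N. p i * s i) \<le> 0 \<and>
     (\<forall>i\<in>{1..N}. s i + \<beta> \<ge> \<alpha> i * g x (\<xi> i))"

lemma vCVaR_eq_Inf_cvar_feasible:
  "vCVaR X c \<epsilon> N p g \<xi> \<alpha> = Inf {ereal (c \<bullet> x) | x \<beta> s. cvar_feasible X \<epsilon> N p g \<xi> \<alpha> x \<beta> s}"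
  by (simp add: vCVaR_def cvar_feasible_def)

lemma vCVaR_lower:
  "cvar_feasible X \<epsilon> N p g \<xi> \<alpha> x \<beta> s \<Longrightarrow> vCVaR X c \<epsilon> N p g \<xi> \<alpha> \<le> ereal (c \<bullet> x)"
  unfolding vCVaR_eq_Inf_cvar_feasible by (rule Inf_lower) blast

lemma vCVaR_greatest:
  assumes "\<And>x \<beta> s. cvar_feasible X \<epsilon> N p g \<xi> \<alpha> x \<beta> s \<Longrightarrow> v \<le> c \<bullet> x"
  shows "ereal v \<le> vCVaR X c \<epsilon> N p g \<xi> \<alpha>"
  unfolding vCVaR_eq_Inf_cvar_feasible by (rule Inf_greatest) (auto intro: assms)

lemma cvar_constraint_imp_violation_prob_le:
  fixes G s \<alpha> p :: "nat \<Rightarrow> real"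
  assumes "0 \<le> \<epsilon>" and "\<beta> \<le> 0" and s_nonneg: "\<forall>i\<in>{1..N}. s i \<ge> 0"
    and cvar: "\<epsilon> * \<beta> + (\<Sum>i=1..N. p i * s i) \<le> 0"
    and slack: "\<forall>i\<in>{1..N}. s i + \<beta> \<ge> \<alpha> i * G i"
    and \<alpha>_pos: "\<forall>i\<in>{1..N}. \<alpha> i > 0" and p_nonneg: "\<forall>i\<in>{1..N}. p i \<ge> 0"
  shows "(\<Sum>i\<in>{i\<in>{1..N}. G i > 0}. p i) \<le> \<epsilon>"
proof -
  let ?V = "{i\<in>{1..N}. G i > 0}"
  have s_large: "s i > - \<beta>" if "i \<in> ?V" for i
  proof -
    have "\<alpha> i * G i > 0"
      using \<alpha>_pos that by simp
    then show ?thesis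
      using slack that by force
  qed
  have "(\<Sum>i\<in>?V. p i) * (- \<beta>) \<le> (\<Sum>i\<in>?V. p i * s i)"
    unfolding sum_distrib_right
  proof (rule sum_mono)
    fix i assume "i \<in> ?V"
    then have "- \<beta> \<le> s i" and "p i \<ge> 0"
      using s_large p_nonneg by (auto intro: less_imp_le)
    then show "p i * - \<beta> \<le> p i * s i"
      by (rule mult_left_mono)
  qed
  also have V_le: "\<dots> \<le> (\<Sum>i=1..N. p i * s i)"
    by (rule sum_mono2) (use p_nonneg s_nonneg in auto)
  also have "\<dots> \<le> \<epsilon> * (- \<beta>)"
    using cvar by simp
  finally have bound: "(\<Sum>i\<in>?V. p i) * (- \<beta>) \<le> \<epsilon> * (- \<beta>)" .
  show ?thesis
  proof (cases "\<beta> < 0")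
    case True
    with bound show ?thesis by simp
  next
    case False
    with \<open>\<beta> \<le> 0\<close> have "\<beta> = 0" by simp
    \<comment> \<open>Every violated scenario needs \<open>s i > 0\<close> at total cost \<open>\<Sum> p i * s i \<le> 0\<close>, so it has probability 0.\<close>
    have "(\<Sum>i\<in>?V. p i * s i) \<le> 0"
      using V_le cvar \<open>\<beta> = 0\<close> by simp
    moreover have terms_nonneg: "\<forall>i\<in>?V. p i * s i \<ge> 0"
      using p_nonneg s_nonneg by simp
    then have "(\<Sum>i\<in>?V. p i * s i) \<ge> 0"
      by (intro sum_nonneg) blast
    ultimately have "(\<Sum>i\<in>?V. p i * s i) = 0"
      by linarith
    then have "\<forall>i\<in>?V. p i * s i = 0"
      by (subst (asm) sum_nonneg_eq_0_iff) (use terms_nonneg in auto)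
    then have "\<forall>i\<in>?V. p i = 0"
      using s_large \<open>\<beta> = 0\<close> by (metis less_irrefl mult_eq_0_iff neg_0_equal_iff_equal)
    then show ?thesis
      using \<open>0 \<le> \<epsilon>\<close> by simp
  qed
qed

lemma chance_prob_eq_one_minus_violation_prob:
  fixes G p :: "nat \<Rightarrow> real"
  assumes "(\<Sum>i=1..N. p i) = 1"
  shows "(\<Sum>i=1..N. p i * (if G i \<le> 0 then 1 else 0)) = 1 - (\<Sum>i\<in>{i\<in>{1..N}. G i > 0}. p i)"
proof -
  have "(\<Sum>i=1..N. p i * (if G i \<le> 0 then 1 else 0))
      = (\<Sum>i=1..N. p i) - (\<Sum>i=1..N. if G i > 0 then p i else 0)"
    unfolding sum_subtractf[symmetric] by (rule sum.cong) auto
  also have "(\<Sum>i=1..N. if G i > 0 then p i else 0) = (\<Sum>i\<in>{i\<in>{1..N}. G i > 0}. p i)"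
    by (rule sum.inter_filter[symmetric]) simp
  finally show ?thesis
    using assms by simp
qed

lemma vCVaR_ge_chance_optimum:
  fixes X :: "'a::real_inner set" and g :: "'a \<Rightarrow> 'b \<Rightarrow> real"
  assumes "0 \<le> \<epsilon>" and \<alpha>_pos: "\<forall>i\<in>{1..N}. \<alpha> i > 0"
    and p_nonneg: "\<forall>i\<in>{1..N}. p i \<ge> 0" and p_sum: "(\<Sum>i=1..N. p i) = 1"
    and opt: "\<forall>x\<in>X. (\<Sum>i=1..N. p i * (if g x (\<xi> i) \<le> 0 then 1 else 0)) \<ge> 1 - \<epsilon> \<longrightarrow> v \<le> c \<bullet> x"
  shows "ereal v \<le> vCVaR X c \<epsilon> N p g \<xi> \<alpha>"
proof (rule vCVaR_greatest)
  fix x \<beta> s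
  assume feas: "cvar_feasible X \<epsilon> N p g \<xi> \<alpha> x \<beta> s"
  then have "(\<Sum>i\<in>{i\<in>{1..N}. g x (\<xi> i) > 0}. p i) \<le> \<epsilon>"
    using cvar_constraint_imp_violation_prob_le[of \<epsilon> \<beta> N s p \<alpha> "\<lambda>i. g x (\<xi> i)"]
      \<open>0 \<le> \<epsilon>\<close> \<alpha>_pos p_nonneg
    by (simp add: cvar_feasible_def)
  then have "(\<Sum>i=1..N. p i * (if g x (\<xi> i) \<le> 0 then 1 else 0)) \<ge> 1 - \<epsilon>"
    unfolding chance_prob_eq_one_minus_violation_prob[OF p_sum] by simp
  then show "v \<le> c \<bullet> x"
    using opt feas by (simp add: cvar_feasible_def)
qed

lemma exists_uniform_scale:
  fixes f :: "'i \<Rightarrow> real"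
  assumes "finite K" and "\<forall>i\<in>K. f i > 0"
  shows "\<exists>M\<ge>1. \<forall>i\<in>K. t \<le> M * f i"
proof (intro exI conjI ballI)
  let ?M = "1 + (\<Sum>i\<in>K. \<bar>t\<bar> / f i)"
  have terms_nonneg: "\<forall>i\<in>K. \<bar>t\<bar> / f i \<ge> 0"
    using assms(2) by (auto intro: divide_nonneg_pos)
  then show "?M \<ge> 1"
    by (simp add: sum_nonneg)
  fix i assume "i \<in> K"
  then have "\<bar>t\<bar> / f i \<le> ?M"
    using member_le_sum[of i K "\<lambda>i. \<bar>t\<bar> / f i"] terms_nonneg \<open>finite K\<close> by simp
  then have "\<bar>t\<bar> \<le> ?M * f i"
    using assms(2) \<open>i \<in> K\<close> by (simp add: pos_divide_le_eq)
  then show "t \<le> ?M * f i"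
    by linarith
qed

lemma sum_hinge_outside_le:
  fixes G p :: "nat \<Rightarrow> real"
  assumes "K \<subseteq> {1..N}" and "t \<ge> 0"
    and p_nonneg: "\<forall>i\<in>{1..N}. p i \<ge> 0" and p_sum: "(\<Sum>i=1..N. p i) = 1"
  shows "(\<Sum>i=1..N. p i * (if i \<in> K then 0 else max 0 (G i + t)))
           \<le> (\<Sum>i\<in>{1..N} - K. p i * max 0 (G i)) + t * (1 - (\<Sum>i\<in>K. p i))"
proof -
  have "(\<Sum>i=1..N. p i * (if i \<in> K then 0 else max 0 (G i + t)))
      = (\<Sum>i\<in>{1..N} - K. p i * max 0 (G i + t))"
    by (rule sum.mono_neutral_cong_right) auto
  also have "\<dots> \<le> (\<Sum>i\<in>{1..N} - K. p i * max 0 (G i) + t * p i)"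
  proof (rule sum_mono)
    fix i assume "i \<in> {1..N} - K"
    have "max 0 (G i + t) \<le> max 0 (G i) + t"
      using \<open>t \<ge> 0\<close> by linarith
    then have "p i * max 0 (G i + t) \<le> p i * (max 0 (G i) + t)"
      using p_nonneg \<open>i \<in> {1..N} - K\<close> by (intro mult_left_mono) auto
    then show "p i * max 0 (G i + t) \<le> p i * max 0 (G i) + t * p i"
      by (simp add: algebra_simps)
  qed
  also have "\<dots> = (\<Sum>i\<in>{1..N} - K. p i * max 0 (G i)) + t * (1 - (\<Sum>i\<in>K. p i))"
    using assms(1) p_sum by (simp add: sum.distrib sum_distrib_left[symmetric] sum_diff)
  finally show ?thesis .
qed

lemma Inf_vCVaR_le_strictly_feasible:
  fixes X :: "'a::real_inner set" and g :: "'a \<Rightarrow> 'b \<Rightarrow> real"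
  assumes "y \<in> X" and "K \<subseteq> I" and "I \<subseteq> {1..N}"
    and strict: "\<forall>i\<in>K. g y (\<xi> i) < 0" and prob_K: "(\<Sum>i\<in>K. p i) > 1 - \<epsilon>"
    and p_nonneg: "\<forall>i\<in>{1..N}. p i \<ge> 0" and p_sum: "(\<Sum>i=1..N. p i) = 1"
  shows "Inf {vCVaR X c \<epsilon> N p g \<xi> \<alpha> | \<alpha>. (\<forall>i\<in>{1..N} - I. \<alpha> i = 1) \<and> (\<forall>i\<in>I. \<alpha> i \<ge> 1)}
           \<le> ereal (c \<bullet> y)"
proof -
  define G where "G i = g y (\<xi> i)" for i
  define gap where "gap = \<epsilon> - (1 - (\<Sum>i\<in>K. p i))"
  define D where "D = (\<Sum>i\<in>{1..N} - K. p i * max 0 (G i))"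
  define t where "t = D / gap + 1"
  have K_sub: "K \<subseteq> {1..N}"
    using assms(2,3) by blast
  then have "finite K"
    using finite_subset by blast
  have "gap > 0"
    using prob_K by (simp add: gap_def)
  have "D \<ge> 0"
    unfolding D_def using p_nonneg by (intro sum_nonneg) simp
  then have "t > 0"
    using \<open>gap > 0\<close> by (simp add: t_def add_nonneg_pos)
  have "gap * t = D + gap"
    using \<open>gap > 0\<close> by (simp add: t_def field_simps)
  then have D_le: "D + t * (1 - (\<Sum>i\<in>K. p i)) \<le> \<epsilon> * t"
    using \<open>gap > 0\<close> by (simp add: gap_def algebra_simps)
  obtain M where "M \<ge> 1" and M: "\<forall>i\<in>K. t \<le> M * - G i"
    using exists_uniform_scale[of K "\<lambda>i. - G i" t] \<open>finite K\<close> strict by (auto simp: G_def)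
  \<comment> \<open>Scaling by \<open>M\<close> on \<open>K\<close> makes the slack vanish there, and \<open>P(K) > 1 - \<epsilon>\<close> leaves room for the rest.\<close>
  define \<alpha> where "\<alpha> i = (if i \<in> K then M else 1)" for i
  define s where "s i = (if i \<in> K then 0 else max 0 (G i + t))" for i
  have "(\<Sum>i=1..N. p i * s i) \<le> D + t * (1 - (\<Sum>i\<in>K. p i))"
    unfolding s_def D_def using K_sub p_nonneg p_sum \<open>t > 0\<close> by (intro sum_hinge_outside_le) auto
  also have "\<dots> \<le> \<epsilon> * t"
    by (rule D_le)
  finally have "cvar_feasible X \<epsilon> N p g \<xi> \<alpha> y (- t) s"
    using \<open>y \<in> X\<close> \<open>t > 0\<close> M by (auto simp: cvar_feasible_def s_def \<alpha>_def G_def algebra_simps)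
  then have "vCVaR X c \<epsilon> N p g \<xi> \<alpha> \<le> ereal (c \<bullet> y)"
    by (rule vCVaR_lower)
  moreover have "(\<forall>i\<in>{1..N} - I. \<alpha> i = 1) \<and> (\<forall>i\<in>I. \<alpha> i \<ge> 1)"
    using \<open>K \<subseteq> I\<close> \<open>M \<ge> 1\<close> by (auto simp: \<alpha>_def)
  ultimately show ?thesis
    by (blast intro: Inf_lower2)
qed

lemma convex_exists_common_strict_point:
  fixes f :: "'i \<Rightarrow> 'a::real_vector \<Rightarrow> real"
  assumes "convex X" and "finite B" and "B \<noteq> {}" and convex_f: "\<forall>i\<in>B. convex_on X (f i)"
    and points: "\<forall>i\<in>B. \<exists>x\<in>X. (\<forall>j\<in>B. f j x \<le> 0) \<and> f i x < 0"
  shows "\<exists>z\<in>X. \<forall>i\<in>B. f i z < 0"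
proof -
  obtain x where x: "\<forall>i\<in>B. x i \<in> X \<and> (\<forall>j\<in>B. f j (x i) \<le> 0) \<and> f i (x i) < 0"
    using bchoice[of B "\<lambda>i x. x \<in> X \<and> (\<forall>j\<in>B. f j x \<le> 0) \<and> f i x < 0"] points by blast
  define n where "n = real (card B)"
  have "n > 0"
    using \<open>finite B\<close> \<open>B \<noteq> {}\<close> by (simp add: n_def card_gt_0_iff)
  have weights: "(\<Sum>k\<in>B. 1 / n) = 1"
    using \<open>n > 0\<close> by (simp add: n_def)
  define z where "z = (\<Sum>k\<in>B. (1 / n) *\<^sub>R x k)"
  have "z \<in> X"
    unfolding z_def using \<open>convex X\<close> \<open>finite B\<close> weights \<open>n > 0\<close> x by (intro convex_sum) auto
  moreover have "f i z < 0" if "i \<in> B" for i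
  proof -
    have "f i z \<le> (\<Sum>k\<in>B. (1 / n) * f i (x k))"
      unfolding z_def using \<open>finite B\<close> \<open>B \<noteq> {}\<close> convex_f weights \<open>n > 0\<close> x that
      by (intro convex_on_sum) auto
    also have "\<dots> < (\<Sum>k\<in>B. 0)"
      using \<open>finite B\<close> x that \<open>n > 0\<close>
      by (intro sum_strict_mono_ex1) (auto simp: divide_nonpos_pos divide_neg_pos intro!: bexI[of _ i])
    finally show ?thesis
      by simp
  qed
  ultimately show ?thesis
    by blast
qed

lemma convex_exists_strict_point_near:
  fixes f :: "'i \<Rightarrow> 'a::real_inner \<Rightarrow> real"
  assumes "convex X" and "x \<in> X" and "z \<in> X" and convex_f: "\<forall>i\<in>B. convex_on X (f i)"
    and "\<forall>i\<in>B. f i x \<le> 0" and "\<forall>i\<in>B. f i z < 0" and "e > 0"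
  shows "\<exists>y\<in>X. (\<forall>i\<in>B. f i y < 0) \<and> c \<bullet> y \<le> c \<bullet> x + e"
proof -
  define d where "d = c \<bullet> z - c \<bullet> x"
  define l where "l = min 1 (e / (\<bar>d\<bar> + 1))"
  have "0 < l" "l \<le> 1"
    using \<open>e > 0\<close> by (auto simp: l_def)
  define y where "y = (1 - l) *\<^sub>R x + l *\<^sub>R z"
  have "y \<in> X"
    unfolding y_def using \<open>convex X\<close> \<open>x \<in> X\<close> \<open>z \<in> X\<close> \<open>0 < l\<close> \<open>l \<le> 1\<close>
    by (intro convexD) auto
  moreover have "f i y < 0" if "i \<in> B" for i
  proof -
    have "f i y \<le> (1 - l) * f i x + l * f i z"
      unfolding y_def using convex_f \<open>x \<in> X\<close> \<open>z \<in> X\<close> \<open>0 < l\<close> \<open>l \<le> 1\<close> that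
      by (intro convex_onD) auto
    moreover have "(1 - l) * f i x \<le> 0" and "l * f i z < 0"
      using assms(5,6) \<open>0 < l\<close> \<open>l \<le> 1\<close> that by (auto simp: mult_nonneg_nonpos mult_pos_neg)
    ultimately show ?thesis
      by linarith
  qed
  moreover have "c \<bullet> y \<le> c \<bullet> x + e"
  proof -
    have "c \<bullet> y = c \<bullet> x + l * d"
      by (simp add: y_def d_def algebra_simps)
    also have "l * d \<le> l * \<bar>d\<bar>"
      using \<open>0 < l\<close> by (intro mult_left_mono) auto
    also have "\<dots> \<le> e / (\<bar>d\<bar> + 1) * \<bar>d\<bar>"
      by (intro mult_right_mono) (auto simp: l_def)
    also have "\<dots> \<le> e"
      using \<open>e > 0\<close> by (simp add: field_simps)
    finally show ?thesis
      by simp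
  qed
  ultimately show ?thesis
    by blast
qed

lemma chance_optimum_le_Inf_vCVaR:
  fixes X :: "'a::real_inner set" and g :: "'a \<Rightarrow> 'b \<Rightarrow> real"
  assumes "0 \<le> \<epsilon>" and "\<forall>i\<in>{1..N}. p i \<ge> 0" and "(\<Sum>i=1..N. p i) = 1"
    and "\<forall>x\<in>X. (\<Sum>i=1..N. p i * (if g x (\<xi> i) \<le> 0 then 1 else 0)) \<ge> 1 - \<epsilon> \<longrightarrow> v \<le> c \<bullet> x"
  shows "ereal v \<le> Inf {vCVaR X c \<epsilon> N p g \<xi> \<alpha> | \<alpha>. (\<forall>i\<in>{1..N} - I. \<alpha> i = 1) \<and> (\<forall>i\<in>I. \<alpha> i \<ge> 1)}"
proof (rule Inf_greatest, clarify)
  fix \<alpha> :: "nat \<Rightarrow> real"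
  assume "\<forall>i\<in>{1..N} - I. \<alpha> i = 1" and "\<forall>i\<in>I. \<alpha> i \<ge> 1"
  then have "\<forall>i\<in>{1..N}. \<alpha> i > 0"
    by (metis Diff_iff less_numeral_extra(1) order_less_le_trans)
  then show "ereal v \<le> vCVaR X c \<epsilon> N p g \<xi> \<alpha>"
    using assms by (intro vCVaR_ge_chance_optimum)
qed

lemma Inf_vCVaR_le_convex:
  fixes X :: "'a::real_inner set" and g :: "'a \<Rightarrow> 'b \<Rightarrow> real"
  assumes "convex X" and "x \<in> X" and "B \<subseteq> I" and "I \<subseteq> {1..N}"
    and convex_g: "\<forall>i\<in>B. convex_on X (\<lambda>x. g x (\<xi> i))"
    and x_feasible: "\<forall>i\<in>B. g x (\<xi> i) \<le> 0"
    and points: "\<forall>i\<in>B. \<exists>xi\<in>X. (\<forall>i'\<in>B. g xi (\<xi> i') \<le> 0) \<and> g xi (\<xi> i) < 0"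
    and prob_B: "(\<Sum>i\<in>B. p i) > 1 - \<epsilon>" and "\<epsilon> < 1"
    and p_nonneg: "\<forall>i\<in>{1..N}. p i \<ge> 0" and p_sum: "(\<Sum>i=1..N. p i) = 1"
  shows "Inf {vCVaR X c \<epsilon> N p g \<xi> \<alpha> | \<alpha>. (\<forall>i\<in>{1..N} - I. \<alpha> i = 1) \<and> (\<forall>i\<in>I. \<alpha> i \<ge> 1)}
           \<le> ereal (c \<bullet> x)"
    (is "?Inf \<le> _")
proof (rule ereal_le_epsilon2)
  have "finite B"
    using assms(3,4) by (meson finite_atLeastAtMost finite_subset)
  moreover have "B \<noteq> {}"
    using prob_B \<open>\<epsilon> < 1\<close> by auto
  ultimately obtain z where "z \<in> X" and z_strict: "\<forall>i\<in>B. g z (\<xi> i) < 0"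
    using convex_exists_common_strict_point[OF \<open>convex X\<close> _ _ convex_g points] by blast
  fix e :: real assume "e > 0"
  then obtain y where "y \<in> X" and "\<forall>i\<in>B. g y (\<xi> i) < 0" and "c \<bullet> y \<le> c \<bullet> x + e"
    using convex_exists_strict_point_near[OF \<open>convex X\<close> \<open>x \<in> X\<close> \<open>z \<in> X\<close> convex_g x_feasible z_strict]
    by blast
  then have "?Inf \<le> ereal (c \<bullet> y)"
    using assms(3,4) prob_B p_nonneg p_sum by (intro Inf_vCVaR_le_strictly_feasible)
  also have "\<dots> \<le> ereal (c \<bullet> x) + ereal e"
    using \<open>c \<bullet> y \<le> c \<bullet> x + e\<close> by simp
  finally show "?Inf \<le> ereal (c \<bullet> x) + ereal e" .
qed

theorem corollary3:
  fixes X :: "(real ^ 'n) set" and c :: "real ^ 'n" and \<epsilon> :: real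
    and N J :: nat and \<xi> :: "nat \<Rightarrow> 'b" and p :: "nat \<Rightarrow> real"
    and gj :: "nat \<Rightarrow> real ^ 'n \<Rightarrow> 'b \<Rightarrow> real"
    and xstar :: "real ^ 'n"
  defines "g \<equiv> gmax J gj"
  defines "Istar \<equiv> {i\<in>{1..N}. g xstar (\<xi> i) \<le> 0}"
  assumes eps: "0 < \<epsilon>" "\<epsilon> < 1"
    and J: "J \<ge> 1"
    and p_nonneg: "\<forall>i\<in>{1..N}. p i \<ge> 0"
    and p_sum: "(\<Sum>i=1..N. p i) = 1"
    and xstar_feas: "xstar \<in> X"
      "(\<Sum>i=1..N. p i * (if g xstar (\<xi> i) \<le> 0 then 1 else 0)) \<ge> 1 - \<epsilon>"
    and xstar_opt: "\<forall>x\<in>X. (\<Sum>i=1..N. p i * (if g x (\<xi> i) \<le> 0 then 1 else 0)) \<ge> 1 - \<epsilon>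
                       \<longrightarrow> c \<bullet> xstar \<le> c \<bullet> x"
    and AB: "(\<Sum>i\<in>{i\<in>{1..N}. g xstar (\<xi> i) < 0}. p i) > 1 - \<epsilon>
           \<or> (convex X \<and> (\<forall>i\<in>Istar. convex_on UNIV (\<lambda>x. g x (\<xi> i))) \<and>
              (\<exists>Ibar \<subseteq> Istar.
                 (\<forall>i\<in>Ibar. \<exists>xi\<in>X. (\<forall>i'\<in>Istar. g xi (\<xi> i') \<le> 0) \<and> g xi (\<xi> i) < 0) \<and>
                 (\<Sum>i\<in>Ibar. p i) > 1 - \<epsilon>))"
  shows "ereal (c \<bullet> xstar) =
    Inf {vCVaR X c \<epsilon> N p g \<xi> \<alpha> | \<alpha>.
           (\<forall>i\<in>{1..N} - Istar. \<alpha> i = 1) \<and> (\<forall>i\<in>Istar. \<alpha> i \<ge> 1)}"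
proof -
  have Istar_sub: "Istar \<subseteq> {1..N}"
    by (auto simp: Istar_def)
  have "Inf {vCVaR X c \<epsilon> N p g \<xi> \<alpha> | \<alpha>.
          (\<forall>i\<in>{1..N} - Istar. \<alpha> i = 1) \<and> (\<forall>i\<in>Istar. \<alpha> i \<ge> 1)} \<le> ereal (c \<bullet> xstar)"
    using AB
  proof (elim disjE conjE exE)
    assume "(\<Sum>i\<in>{i\<in>{1..N}. g xstar (\<xi> i) < 0}. p i) > 1 - \<epsilon>"
    then show ?thesis
      using xstar_feas(1) Istar_sub p_nonneg p_sum
      by (intro Inf_vCVaR_le_strictly_feasible) (auto simp: Istar_def)
  next
    fix Ibar
    assume "convex X" and "\<forall>i\<in>Istar. convex_on UNIV (\<lambda>x. g x (\<xi> i))"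
      and "Ibar \<subseteq> Istar" and points: "\<forall>i\<in>Ibar. \<exists>xi\<in>X. (\<forall>i'\<in>Istar. g xi (\<xi> i') \<le> 0) \<and> g xi (\<xi> i) < 0"
      and "(\<Sum>i\<in>Ibar. p i) > 1 - \<epsilon>"
    moreover have "\<forall>i\<in>Ibar. \<exists>xi\<in>X. (\<forall>i'\<in>Ibar. g xi (\<xi> i') \<le> 0) \<and> g xi (\<xi> i) < 0"
      using points \<open>Ibar \<subseteq> Istar\<close> by (meson subsetD)
    ultimately show ?thesis
      using xstar_feas(1) Istar_sub eps(2) p_nonneg p_sum
      by (intro Inf_vCVaR_le_convex) (auto simp: Istar_def intro: convex_on_subset)
  qed
  moreover have "ereal (c \<bullet> xstar) \<le> Inf {vCVaR X c \<epsilon> N p g \<xi> \<alpha> | \<alpha>.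
          (\<forall>i\<in>{1..N} - Istar. \<alpha> i = 1) \<and> (\<forall>i\<in>Istar. \<alpha> i \<ge> 1)}"
    using eps p_nonneg p_sum xstar_opt by (intro chance_optimum_le_Inf_vCVaR) auto
  ultimately show ?thesis
    by (rule antisym[rotated])
qed

end
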